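(* Let $c>0$, $\lambda>0$ and, for $t>0$ and $\mathbf{x}\in\mathbb{R}^3$ with $\|\mathbf{x}\|<ct$, let $$u(\mathbf{x},t)=\frac{e^{-\lambda t}}{\pi}\left(\frac{\lambda}{2c}\right)^2\frac{1}{\sqrt{c^2t^2-\|\mathbf{x}\|^2}}\,I_1\!\left(\frac{\lambda}{c}\sqrt{c^2t^2-\|\mathbf{x}\|^2}\right),$$ where $I_1(z)=\sum_{k\ge0}(z/2)^{2k+1}/(k!(k+1)!)$. Then $u$ satisfies the three-dimensional telegraph equation $$\left(\frac{\partial^2}{\partial t^2}+2\lambda\frac{\partial}{\partial t}-c^2\Delta\right)u(\mathbf{x},t)=0,\qquad \Delta=\sum_{j=1}^3\frac{\partial^2}{\partial x_j^2},$$ in the region $\{(\mathbf{x},t):t>0,\ \|\mathbf{x}\|<ct\}$.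
   Context: The function $u$ is (known to be) the density of $P\{\mathbf{U}_3(t)\in d\mathbf{x},\ \cup_{k\ge1}\{N(t)=2k+1\}\}$ for a random flight $\mathbf{U}_3(t)$ in $\mathbb{R}^3$ with speed $c$ whose changes of direction occur only at the even-numbered events of a homogeneous Poisson process $N(t)$ of rate $\lambda$. *)

theory Defs
  imports "HOL-Analysis.Analysis"
begin

definition bessel_I1 :: "real \<Rightarrow> real" where
  "bessel_I1 z = (\<Sum>k. (z / 2) ^ (2 * k + 1) / (fact k * fact (k + 1)))"

text \<open>The density u(x,t); points of space-time are pairs (x,t) with x in R^3.
  The formula is only meaningful for norm x < c t, where the statement is made.\<close>
definition u_dens :: "real \<Rightarrow> real \<Rightarrow> (real ^ 3) \<times> real \<Rightarrow> real" where
  "u_dens c lam p = (let x = fst p; t = snd p; r = sqrt (c^2 * t^2 - (norm x)^2) in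
     exp (- lam * t) / pi * (lam / (2 * c))^2 * (1 / r) * bessel_I1 (lam / c * r))"

definition dir_deriv :: "('a::real_normed_vector \<Rightarrow> real) \<Rightarrow> 'a \<Rightarrow> 'a \<Rightarrow> real" where
  "dir_deriv f p v = deriv (\<lambda>s. f (p + s *\<^sub>R v)) 0"

definition dir_deriv2 :: "('a::real_normed_vector \<Rightarrow> real) \<Rightarrow> 'a \<Rightarrow> 'a \<Rightarrow> real" where
  "dir_deriv2 f p v = deriv (deriv (\<lambda>s. f (p + s *\<^sub>R v))) 0"

definition twice_diff_along :: "('a::real_normed_vector \<Rightarrow> real) \<Rightarrow> 'a \<Rightarrow> 'a \<Rightarrow> bool" where
  "twice_diff_along f p v \<longleftrightarrow>
     (\<forall>\<^sub>F s in nhds 0. (\<lambda>r. f (p + r *\<^sub>R v)) differentiable (at s)) \<and>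
     deriv (\<lambda>r. f (p + r *\<^sub>R v)) differentiable (at 0)"

end

theory Submission
  imports Defs
begin

text \<open>With \<open>w = c\<^sup>2 t\<^sup>2 - \<parallel>x\<parallel>\<^sup>2\<close> and \<open>a = \<lambda>/c\<close>, the density is \<open>u = K exp(-\<lambda> t) G(w)\<close>, where
  \<open>G(w) = I\<^sub>1(a \<surd>w) / \<surd>w\<close> is an entire power series in \<open>w\<close>. For any function of this radial
  form in \<open>n\<close> space dimensions, the chain rule along the coordinate directions gives
  \<open>(\<partial>\<^sub>t\<^sub>t + 2\<lambda> \<partial>\<^sub>t - c\<^sup>2 \<Delta>) u = K exp(-\<lambda> t) (4 c\<^sup>2 w G'' + 2 (n + 1) c\<^sup>2 G' - \<lambda>\<^sup>2 G)\<close>: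
  the terms in \<open>\<lambda> t G'\<close> cancel, and \<open>\<Sigma>\<^sub>j x\<^sub>j\<^sup>2 = \<parallel>x\<parallel>\<^sup>2\<close> combines with \<open>c\<^sup>2 t\<^sup>2\<close> into \<open>w\<close>.
  For \<open>n = 3\<close> the bracket is \<open>4 c\<^sup>2 (w G'' + 2 G') - \<lambda>\<^sup>2 G\<close>, which vanishes because the modified
  Bessel equation for \<open>I\<^sub>1\<close> turns into \<open>w G'' + 2 G' = (a/2)\<^sup>2 G\<close>, checked coefficientwise.\<close>

definition pseries :: "(nat \<Rightarrow> real) \<Rightarrow> real \<Rightarrow> real" where
  "pseries c w = (\<Sum>n. c n * w ^ n)"

lemma pseries_has_field_derivative:
  assumes "\<And>y. summable (\<lambda>n. c n * y ^ n)"
  shows "(pseries c has_field_derivative pseries (diffs c) w) (at w)"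
  unfolding pseries_def by (rule termdiffs_strong_converges_everywhere[OF assms])

lemma sums_real_mult_pseries_diffs:
  assumes "summable (\<lambda>n. diffs c n * w ^ n)"
  shows "(\<lambda>n. real n * c n * w ^ n) sums (w * pseries (diffs c) w)"
proof -
  have "(\<lambda>n. w * (diffs c n * w ^ n)) sums (w * pseries (diffs c) w)"
    unfolding pseries_def by (rule sums_mult[OF summable_sums[OF assms]])
  then have "(\<lambda>n. real (Suc n) * c (Suc n) * w ^ Suc n) sums (w * pseries (diffs c) w)"
    by (simp add: diffs_def algebra_simps)
  then show ?thesis
    using sums_Suc_iff[of "\<lambda>n. real n * c n * w ^ n"] by simp
qed

definition I1_coeff :: "real \<Rightarrow> nat \<Rightarrow> real" where
  "I1_coeff a n = (a / 2) ^ (2 * n + 1) / (fact n * fact (n + 1))"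

lemma summable_I1_coeff: "summable (\<lambda>n. I1_coeff a n * y ^ n)"
proof (rule summable_comparison_test')
  show "summable (\<lambda>n. \<bar>a / 2\<bar> * (inverse (fact n) * ((a / 2) ^ 2 * \<bar>y\<bar>) ^ n))"
    by (intro summable_mult summable_exp)
  fix n
  have "I1_coeff a n * y ^ n = a / 2 * ((a / 2) ^ 2 * y) ^ n / (fact n * fact (n + 1))"
    by (simp add: I1_coeff_def power_mult power_mult_distrib)
  then have "norm (I1_coeff a n * y ^ n) = \<bar>a / 2\<bar> * ((a / 2) ^ 2 * \<bar>y\<bar>) ^ n / (fact n * fact (n + 1))"
    by (simp add: abs_mult power_abs power_divide)
  also have "\<dots> \<le> \<bar>a / 2\<bar> * ((a / 2) ^ 2 * \<bar>y\<bar>) ^ n / fact n"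
    by (intro divide_left_mono) (auto intro: order.trans[OF _ mult_left_mono[OF fact_ge_1]])
  finally show "norm (I1_coeff a n * y ^ n) \<le> \<bar>a / 2\<bar> * (inverse (fact n) * ((a / 2) ^ 2 * \<bar>y\<bar>) ^ n)"
    by (simp add: field_simps)
qed

lemma pseries_I1_coeff_has_field_derivative:
  shows "(pseries (I1_coeff a) has_field_derivative pseries (diffs (I1_coeff a)) y) (at y)"
    and "(pseries (diffs (I1_coeff a)) has_field_derivative pseries (diffs (diffs (I1_coeff a))) y) (at y)"
  by (intro pseries_has_field_derivative summable_I1_coeff termdiff_converges_all)+

lemma I1_coeff_Suc: "real (n + 1) * real (n + 2) * I1_coeff a (n + 1) = (a / 2) ^ 2 * I1_coeff a n"
proof -
  have "(fact (n + 2) :: real) = real (n + 2) * (real (n + 1) * fact n)"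
    by (simp add: fact_Suc numeral_2_eq_2)
  moreover have "(fact (n + 1) :: real) = real (n + 1) * fact n"
    by simp
  ultimately show ?thesis
    by (simp add: I1_coeff_def power_add power2_eq_square field_simps del: of_nat_Suc fact_Suc)
qed

lemma I1_coeff_pseries_ode:
  "w * pseries (diffs (diffs (I1_coeff a))) w + 2 * pseries (diffs (I1_coeff a)) w
     = (a / 2) ^ 2 * pseries (I1_coeff a) w"
proof -
  let ?b = "I1_coeff a"
  have s0: "summable (\<lambda>n. ?b n * y ^ n)" for y
    by (rule summable_I1_coeff)
  have s1: "summable (\<lambda>n. diffs ?b n * y ^ n)" for y
    by (rule termdiff_converges_all[OF s0])
  have s2: "summable (\<lambda>n. diffs (diffs ?b) n * y ^ n)" for y
    by (rule termdiff_converges_all[OF s1])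
  have p0: "(\<lambda>n. ?b n * w ^ n) sums pseries ?b w"
    and p1: "(\<lambda>n. diffs ?b n * w ^ n) sums pseries (diffs ?b) w"
    unfolding pseries_def by (intro summable_sums s0 s1)+
  have "(\<lambda>n. real n * diffs ?b n * w ^ n + 2 * (diffs ?b n * w ^ n))
      sums (w * pseries (diffs (diffs ?b)) w + 2 * pseries (diffs ?b) w)"
    by (intro sums_add sums_mult sums_real_mult_pseries_diffs s2 p1)
  moreover have "real n * diffs ?b n * w ^ n + 2 * (diffs ?b n * w ^ n) = (a / 2) ^ 2 * (?b n * w ^ n)"
    for n
  proof -
    have "real n * diffs ?b n * w ^ n + 2 * (diffs ?b n * w ^ n)
        = real (n + 1) * real (n + 2) * ?b (n + 1) * w ^ n"
      by (simp add: diffs_def algebra_simps)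
    also have "\<dots> = (a / 2) ^ 2 * (?b n * w ^ n)"
      by (subst I1_coeff_Suc) (rule mult.assoc)
    finally show ?thesis .
  qed
  moreover have "(\<lambda>n. (a / 2) ^ 2 * (?b n * w ^ n)) sums ((a / 2) ^ 2 * pseries ?b w)"
    by (intro sums_mult p0)
  ultimately show ?thesis
    using sums_unique2 by simp
qed

lemma bessel_I1_div_eq_pseries:
  assumes "r \<noteq> 0"
  shows "bessel_I1 (a * r) / r = pseries (I1_coeff a) (r ^ 2)"
proof -
  have "(a * r / 2) ^ (2 * k + 1) / (fact k * fact (k + 1)) = r * (I1_coeff a k * (r ^ 2) ^ k)" for k
    by (simp add: I1_coeff_def power_mult_distrib power_mult[symmetric] field_simps)
  then have "bessel_I1 (a * r) = r * pseries (I1_coeff a) (r ^ 2)"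
    unfolding bessel_I1_def pseries_def by (simp add: suminf_mult summable_I1_coeff)
  with assms show ?thesis
    by simp
qed

lemma u_dens_eq_pseries:
  assumes "c \<noteq> 0" and "c ^ 2 * t ^ 2 - norm x ^ 2 > 0"
  shows "u_dens c lam (x, t)
    = (lam / (2 * c)) ^ 2 / pi * exp (- lam * t) * pseries (I1_coeff (lam / c)) (c ^ 2 * t ^ 2 - norm x ^ 2)"
proof -
  define r where "r = sqrt (c ^ 2 * t ^ 2 - norm x ^ 2)"
  have "r \<noteq> 0" and r_sq: "r ^ 2 = c ^ 2 * t ^ 2 - norm x ^ 2"
    using assms(2) by (auto simp: r_def)
  have "u_dens c lam (x, t) = exp (- lam * t) / pi * (lam / (2 * c)) ^ 2 * (bessel_I1 (lam / c * r) / r)"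
    by (simp add: u_dens_def r_def Let_def)
  also have "bessel_I1 (lam / c * r) / r = pseries (I1_coeff (lam / c)) (c ^ 2 * t ^ 2 - norm x ^ 2)"
    unfolding r_sq[symmetric] by (rule bessel_I1_div_eq_pseries[OF \<open>r \<noteq> 0\<close>])
  finally show ?thesis
    by simp
qed

lemma twice_diff_along_eq_near:
  fixes f :: "'a::real_normed_vector \<Rightarrow> real"
  assumes "open S" and "0 \<in> S" and f_eq: "\<And>s. s \<in> S \<Longrightarrow> f (p + s *\<^sub>R v) = g s"
    and g': "\<And>s. (g has_field_derivative g' s) (at s)"
    and g'': "\<And>s. (g' has_field_derivative g'' s) (at s)"
  shows "twice_diff_along f p v \<and> dir_deriv f p v = g' 0 \<and> dir_deriv2 f p v = g'' 0"
proof -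
  let ?h = "\<lambda>s. f (p + s *\<^sub>R v)"
  have h': "(?h has_field_derivative g' s) (at s)" if "s \<in> S" for s
    by (rule has_field_derivative_transform_within_open[OF g' \<open>open S\<close> that]) (simp add: f_eq)
  then have deriv_h: "deriv ?h s = g' s" if "s \<in> S" for s
    using that by (simp add: DERIV_imp_deriv)
  have h'': "(deriv ?h has_field_derivative g'' 0) (at 0)"
    by (rule has_field_derivative_transform_within_open[OF g'' \<open>open S\<close> \<open>0 \<in> S\<close>])
      (simp add: deriv_h)
  have "\<forall>\<^sub>F s in nhds 0. ?h differentiable (at s)"
    unfolding eventually_nhds real_differentiable_def using assms(1,2) h' by blast
  with h'' show ?thesis
    unfolding twice_diff_along_def dir_deriv_def dir_deriv2_def real_differentiable_def
    using deriv_h[OF \<open>0 \<in> S\<close>] DERIV_imp_deriv[OF h''] by blast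
qed

lemma dir_derivs_exp_mult_comp_quadratic:
  fixes f :: "'a::real_normed_vector \<Rightarrow> real"
  assumes "open S" and "0 \<in> S"
    and f_eq: "\<And>s. s \<in> S \<Longrightarrow> f (p + s *\<^sub>R v) = A * exp (B * s) * G (\<alpha> * s ^ 2 + \<beta> * s + \<gamma>)"
    and G': "\<And>w. (G has_field_derivative G' w) (at w)"
    and G'': "\<And>w. (G' has_field_derivative G'' w) (at w)"
  shows "twice_diff_along f p v
    \<and> dir_deriv f p v = A * (B * G \<gamma> + \<beta> * G' \<gamma>)
    \<and> dir_deriv2 f p v = A * (B ^ 2 * G \<gamma> + (2 * B * \<beta> + 2 * \<alpha>) * G' \<gamma> + \<beta> ^ 2 * G'' \<gamma>)"
proof -
  define q where "q s = \<alpha> * s ^ 2 + \<beta> * s + \<gamma>" for s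
  define q' where "q' s = 2 * \<alpha> * s + \<beta>" for s
  have q: "(q has_field_derivative q' s) (at s)" for s
    unfolding q_def q'_def by (auto intro!: derivative_eq_intros)
  have q': "(q' has_field_derivative 2 * \<alpha>) (at s)" for s
    unfolding q'_def by (auto intro!: derivative_eq_intros)
  have f_eq': "f (p + s *\<^sub>R v) = A * exp (B * s) * G (q s)" if "s \<in> S" for s
    using f_eq[OF that] by (simp add: q_def)
  have Gq: "((\<lambda>s. G (q s)) has_field_derivative G' (q s) * q' s) (at s)"
    and G'q: "((\<lambda>s. G' (q s)) has_field_derivative G'' (q s) * q' s) (at s)" for s
    by (rule DERIV_chain2[OF G' q], rule DERIV_chain2[OF G'' q])
  have d1: "((\<lambda>s. A * exp (B * s) * G (q s)) has_field_derivative
      A * exp (B * s) * (B * G (q s) + q' s * G' (q s))) (at s)" for s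
    by (auto intro!: derivative_eq_intros Gq simp: algebra_simps)
  have d2: "((\<lambda>s. A * exp (B * s) * (B * G (q s) + q' s * G' (q s))) has_field_derivative
      A * exp (B * s) * (B * (B * G (q s) + q' s * G' (q s))
        + B * G' (q s) * q' s + 2 * \<alpha> * G' (q s) + q' s * (G'' (q s) * q' s))) (at s)" for s
    by (auto intro!: derivative_eq_intros Gq G'q q' simp: algebra_simps)
  from twice_diff_along_eq_near[OF assms(1,2) f_eq' d1 d2] show ?thesis
    by (simp add: q_def q'_def power2_eq_square algebra_simps)
qed

lemma norm_add_scaleR_axis_power2:
  fixes x :: "real ^ 'n"
  shows "norm (x + s *\<^sub>R axis j 1) ^ 2 = norm x ^ 2 + 2 * s * x $ j + s ^ 2"
  unfolding power2_norm_eq_inner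
  by (simp add: inner_add_left inner_add_right inner_axis inner_commute power2_eq_square algebra_simps)

lemma radial_dir_derivs_time:
  fixes f :: "(real ^ 'n) \<times> real \<Rightarrow> real"
  assumes f_eq: "\<And>y r. c ^ 2 * r ^ 2 - norm y ^ 2 > 0
      \<Longrightarrow> f (y, r) = K * exp (- lam * r) * G (c ^ 2 * r ^ 2 - norm y ^ 2)"
    and G': "\<And>w. (G has_field_derivative G' w) (at w)"
    and G'': "\<And>w. (G' has_field_derivative G'' w) (at w)"
    and w_def: "w = c ^ 2 * t ^ 2 - norm x ^ 2" and "w > 0"
  shows "twice_diff_along f (x, t) (0, 1)
    \<and> dir_deriv f (x, t) (0, 1) = K * exp (- lam * t) * (- lam * G w + 2 * c ^ 2 * t * G' w)
    \<and> dir_deriv2 f (x, t) (0, 1) = K * exp (- lam * t)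
        * (lam ^ 2 * G w + (2 * c ^ 2 - 4 * lam * c ^ 2 * t) * G' w + 4 * c ^ 4 * t ^ 2 * G'' w)"
proof -
  let ?S = "{s. c ^ 2 * (t + s) ^ 2 - norm x ^ 2 > 0}"
  have "open ?S"
    by (intro open_Collect_less continuous_intros)
  moreover have "0 \<in> ?S"
    using w_def \<open>w > 0\<close> by simp
  moreover have "f ((x, t) + s *\<^sub>R (0, 1))
      = K * exp (- lam * t) * exp (- lam * s) * G (c ^ 2 * s ^ 2 + 2 * c ^ 2 * t * s + w)"
    if "s \<in> ?S" for s
    using f_eq[where y = x and r = "t + s"] that
    by (simp add: w_def mult_exp_exp power2_eq_square algebra_simps)
  ultimately have "twice_diff_along f (x, t) (0, 1)
    \<and> dir_deriv f (x, t) (0, 1) = K * exp (- lam * t) * (- lam * G w + 2 * c ^ 2 * t * G' w)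
    \<and> dir_deriv2 f (x, t) (0, 1) = K * exp (- lam * t) * ((- lam) ^ 2 * G w
        + (2 * (- lam) * (2 * c ^ 2 * t) + 2 * c ^ 2) * G' w + (2 * c ^ 2 * t) ^ 2 * G'' w)"
    by (rule dir_derivs_exp_mult_comp_quadratic[OF _ _ _ G' G''])
  then show ?thesis
    by (simp add: power_mult_distrib algebra_simps)
qed

lemma radial_dir_derivs_axis:
  fixes f :: "(real ^ 'n) \<times> real \<Rightarrow> real"
  assumes f_eq: "\<And>y r. c ^ 2 * r ^ 2 - norm y ^ 2 > 0
      \<Longrightarrow> f (y, r) = K * exp (- lam * r) * G (c ^ 2 * r ^ 2 - norm y ^ 2)"
    and G': "\<And>w. (G has_field_derivative G' w) (at w)"
    and G'': "\<And>w. (G' has_field_derivative G'' w) (at w)"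
    and w_def: "w = c ^ 2 * t ^ 2 - norm x ^ 2" and "w > 0"
  shows "twice_diff_along f (x, t) (axis j 1, 0)
    \<and> dir_deriv2 f (x, t) (axis j 1, 0) = K * exp (- lam * t) * (4 * (x $ j) ^ 2 * G'' w - 2 * G' w)"
proof -
  let ?S = "{s. c ^ 2 * t ^ 2 - norm (x + s *\<^sub>R axis j 1) ^ 2 > 0}"
  have "open ?S"
    by (intro open_Collect_less continuous_intros)
  moreover have "0 \<in> ?S"
    using w_def \<open>w > 0\<close> by simp
  moreover have "f ((x, t) + s *\<^sub>R (axis j 1, 0))
      = K * exp (- lam * t) * exp (0 * s) * G ((- 1) * s ^ 2 + (- 2 * x $ j) * s + w)"
    if "s \<in> ?S" for s
    using f_eq[where y = "x + s *\<^sub>R axis j 1" and r = t] that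
    by (simp add: w_def norm_add_scaleR_axis_power2 algebra_simps)
  ultimately have "twice_diff_along f (x, t) (axis j 1, 0)
    \<and> dir_deriv2 f (x, t) (axis j 1, 0) = K * exp (- lam * t) * (0 ^ 2 * G w
        + (2 * 0 * (- 2 * x $ j) + 2 * (- 1)) * G' w + (- 2 * x $ j) ^ 2 * G'' w)"
    using dir_derivs_exp_mult_comp_quadratic[OF _ _ _ G' G''] by blast
  then show ?thesis
    by (simp add: power_mult_distrib algebra_simps)
qed

lemma telegraph_operator_radial:
  fixes f :: "(real ^ 'n) \<times> real \<Rightarrow> real" and c lam K t w :: real
  assumes f_eq: "\<And>y r. c ^ 2 * r ^ 2 - norm y ^ 2 > 0
      \<Longrightarrow> f (y, r) = K * exp (- lam * r) * G (c ^ 2 * r ^ 2 - norm y ^ 2)"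
    and G': "\<And>w. (G has_field_derivative G' w) (at w)"
    and G'': "\<And>w. (G' has_field_derivative G'' w) (at w)"
    and w_def: "w = c ^ 2 * t ^ 2 - norm x ^ 2" and "w > 0"
  shows "twice_diff_along f (x, t) (0, 1)
    \<and> (\<forall>j. twice_diff_along f (x, t) (axis j 1, 0))
    \<and> dir_deriv2 f (x, t) (0, 1) + 2 * lam * dir_deriv f (x, t) (0, 1)
        - c ^ 2 * (\<Sum>j\<in>UNIV. dir_deriv2 f (x, t) (axis j 1, 0))
      = K * exp (- lam * t) * (4 * c ^ 2 * w * G'' w + 2 * (real CARD('n) + 1) * c ^ 2 * G' w - lam ^ 2 * G w)"
proof -
  note time = radial_dir_derivs_time[OF assms]
  note axis = radial_dir_derivs_axis[OF assms]
  have "norm x ^ 2 = (\<Sum>j\<in>UNIV. (x $ j) ^ 2)"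
    unfolding power2_norm_eq_inner by (simp add: inner_vec_def power2_eq_square)
  have "(\<Sum>j\<in>UNIV. dir_deriv2 f (x, t) (axis j 1, 0))
      = (\<Sum>j\<in>UNIV. 4 * K * exp (- lam * t) * G'' w * (x $ j) ^ 2 - 2 * K * exp (- lam * t) * G' w)"
    using axis by (intro sum.cong) (simp_all add: algebra_simps)
  also have "\<dots> = K * exp (- lam * t) * (4 * norm x ^ 2 * G'' w - 2 * real CARD('n) * G' w)"
    by (simp add: \<open>norm x ^ 2 = _\<close> sum_subtractf sum_distrib_left[symmetric] algebra_simps)
  finally have laplacian: "(\<Sum>j\<in>UNIV. dir_deriv2 f (x, t) (axis j 1, 0))
      = K * exp (- lam * t) * (4 * norm x ^ 2 * G'' w - 2 * real CARD('n) * G' w)" .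
  have "dir_deriv2 f (x, t) (0, 1) + 2 * lam * dir_deriv f (x, t) (0, 1)
        - c ^ 2 * (\<Sum>j\<in>UNIV. dir_deriv2 f (x, t) (axis j 1, 0))
      = K * exp (- lam * t) * (4 * c ^ 2 * w * G'' w + 2 * (real CARD('n) + 1) * c ^ 2 * G' w - lam ^ 2 * G w)"
    by (simp only: laplacian time[THEN conjunct2, THEN conjunct1] time[THEN conjunct2, THEN conjunct2]
        w_def) algebra
  with time axis show ?thesis
    by blast
qed

theorem theorem4p1:
  fixes c lam t :: real and x :: "real ^ 3"
  assumes "c > 0" and "lam > 0" and "t > 0" and "norm x < c * t"
  shows "twice_diff_along (u_dens c lam) (x, t) (0, 1)
    \<and> (\<forall>j. twice_diff_along (u_dens c lam) (x, t) (axis j 1, 0))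
    \<and> dir_deriv2 (u_dens c lam) (x, t) (0, 1) + 2 * lam * dir_deriv (u_dens c lam) (x, t) (0, 1)
        - c^2 * (\<Sum>j\<in>UNIV. dir_deriv2 (u_dens c lam) (x, t) (axis j 1, 0)) = 0"
proof -
  define G where "G = pseries (I1_coeff (lam / c))"
  define w where "w = c ^ 2 * t ^ 2 - norm x ^ 2"
  have "norm x ^ 2 < (c * t) ^ 2"
    using assms by (simp add: power_strict_mono)
  then have "w > 0"
    by (simp add: w_def power_mult_distrib)
  have u_eq: "c ^ 2 * r ^ 2 - norm y ^ 2 > 0
      \<Longrightarrow> u_dens c lam (y, r) = (lam / (2 * c)) ^ 2 / pi * exp (- lam * r) * G (c ^ 2 * r ^ 2 - norm y ^ 2)"
    for y :: "real ^ 3" and r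
    unfolding G_def using \<open>c > 0\<close> by (simp add: u_dens_eq_pseries)
  have "4 * c ^ 2 * w * pseries (diffs (diffs (I1_coeff (lam / c)))) w
      + 2 * (real CARD(3) + 1) * c ^ 2 * pseries (diffs (I1_coeff (lam / c))) w - lam ^ 2 * G w = 0"
    using I1_coeff_pseries_ode[of w "lam / c"] \<open>c > 0\<close>
    by (simp add: G_def power_divide field_simps)
  with telegraph_operator_radial[OF u_eq pseries_I1_coeff_has_field_derivative[of "lam / c", folded G_def] w_def \<open>w > 0\<close>]
  show ?thesis
    by simp
qed

end
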